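(* Let $\mathcal W,\mathcal U,\mathcal V$ be finite, $\Phi_W$ a pmf, $\Phi_{U|W}$ a codebook distribution and $\Phi_{V|W,U}$ a channel. Consider the $n$-fold memoryless setting: source $W^n\sim\prod\Phi_W$, random codebook $\{U^n(w^n)\}_{w^n\in\mathcal W^n}$ with independent entries $U^n(w^n)\sim\prod_t\Phi_{U|W}(\cdot|w_t)$, induced output $P_{V^n}(v^n)=\sum_{w^n}\prod_t\Phi_W(w_t)\Phi_{V|W,U}(v_t|w_t,U_t(w^n))$, and $Q_{V^n}=\prod\Phi_V$. If $H_\Phi(W)>I_\Phi(W,U;V)$, then $\mathbf E\|P_{V^n}-Q_{V^n}\|_{TV}\le\frac32\,2^{-\gamma n}$ for all $n$, where $\gamma>0$ is $$\gamma=\max_{\beta,\beta'\ge0,(\beta,\beta')\ne(0,0)}\ \frac{-\beta'}{2\beta+\beta'}\log\mathbf E_\Phi Z^\beta+\frac{-\beta}{2\beta+\beta'}\log\Big(\mathbf E_{\Phi_V}\sqrt{\mathbf E_{\Phi_{W,U|V}}Z^{1-\beta'}}\Big)^2,\qquad Z=\Phi_W(W)\frac{\Phi_{V|W,U}(V|W,U)}{\Phi_V(V)}.$$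
   Context: Expectations $\mathbf E_\Phi$ are under the single-letter joint $\Phi_W\Phi_{U|W}\Phi_{V|W,U}$; the inner expectation in $\mathbf E_{\Phi_V}\sqrt{\mathbf E_{\Phi_{W,U|V}}(\cdot)}$ is over $(W,U)$ given $V$. All logarithms base 2. Expectation on the left is over the random codebook; total variation is half the $\ell_1$ distance. *)

theory Defs
  imports Complex_Main "HOL-Library.FuncSet"
begin

definition is_pmf :: "('a::finite \<Rightarrow> real) \<Rightarrow> bool" where
  "is_pmf p \<longleftrightarrow> (\<forall>x. 0 \<le> p x) \<and> (\<Sum>x\<in>UNIV. p x) = 1"

definition joint :: "('w \<Rightarrow> real) \<Rightarrow> ('w \<Rightarrow> 'u \<Rightarrow> real) \<Rightarrow> ('w \<Rightarrow> 'u \<Rightarrow> 'v \<Rightarrow> real)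
    \<Rightarrow> 'w \<Rightarrow> 'u \<Rightarrow> 'v \<Rightarrow> real" where
  "joint PW PUW PV w u v = PW w * PUW w u * PV w u v"

definition PhiV :: "('w::finite \<Rightarrow> real) \<Rightarrow> ('w \<Rightarrow> 'u::finite \<Rightarrow> real) \<Rightarrow> ('w \<Rightarrow> 'u \<Rightarrow> 'v \<Rightarrow> real)
    \<Rightarrow> 'v \<Rightarrow> real" where
  "PhiV PW PUW PV v = (\<Sum>w\<in>UNIV. \<Sum>u\<in>UNIV. joint PW PUW PV w u v)"

text \<open>Entropy H(W) in bits (convention 0 log 0 = 0 holds since log 2 0 = 0).\<close>
definition entropyW :: "('w::finite \<Rightarrow> real) \<Rightarrow> real" where
  "entropyW PW = - (\<Sum>w\<in>UNIV. PW w * log 2 (PW w))"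

definition mutinfo :: "('w::finite \<Rightarrow> real) \<Rightarrow> ('w \<Rightarrow> 'u::finite \<Rightarrow> real)
    \<Rightarrow> ('w \<Rightarrow> 'u \<Rightarrow> 'v::finite \<Rightarrow> real) \<Rightarrow> real" where
  "mutinfo PW PUW PV = (\<Sum>w\<in>UNIV. \<Sum>u\<in>UNIV. \<Sum>v\<in>UNIV.
      joint PW PUW PV w u v * log 2 (PV w u v / PhiV PW PUW PV v))"

definition Zfun :: "('w::finite \<Rightarrow> real) \<Rightarrow> ('w \<Rightarrow> 'u::finite \<Rightarrow> real)
    \<Rightarrow> ('w \<Rightarrow> 'u \<Rightarrow> 'v \<Rightarrow> real) \<Rightarrow> 'w \<Rightarrow> 'u \<Rightarrow> 'v \<Rightarrow> real" where
  "Zfun PW PUW PV w u v = PW w * PV w u v / PhiV PW PUW PV v"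

definition EZpow :: "('w::finite \<Rightarrow> real) \<Rightarrow> ('w \<Rightarrow> 'u::finite \<Rightarrow> real)
    \<Rightarrow> ('w \<Rightarrow> 'u \<Rightarrow> 'v::finite \<Rightarrow> real) \<Rightarrow> real \<Rightarrow> real" where
  "EZpow PW PUW PV b = (\<Sum>w\<in>UNIV. \<Sum>u\<in>UNIV. \<Sum>v\<in>UNIV.
      joint PW PUW PV w u v * Zfun PW PUW PV w u v powr b)"

definition ESqrtCond :: "('w::finite \<Rightarrow> real) \<Rightarrow> ('w \<Rightarrow> 'u::finite \<Rightarrow> real)
    \<Rightarrow> ('w \<Rightarrow> 'u \<Rightarrow> 'v::finite \<Rightarrow> real) \<Rightarrow> real \<Rightarrow> real" where
  "ESqrtCond PW PUW PV c = (\<Sum>v\<in>UNIV. PhiV PW PUW PV v *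
      sqrt (\<Sum>w\<in>UNIV. \<Sum>u\<in>UNIV. (joint PW PUW PV w u v / PhiV PW PUW PV v)
              * Zfun PW PUW PV w u v powr c))"

definition gamma_obj :: "('w::finite \<Rightarrow> real) \<Rightarrow> ('w \<Rightarrow> 'u::finite \<Rightarrow> real)
    \<Rightarrow> ('w \<Rightarrow> 'u \<Rightarrow> 'v::finite \<Rightarrow> real) \<Rightarrow> real \<Rightarrow> real \<Rightarrow> real" where
  "gamma_obj PW PUW PV b b' =
     (- b' / (2 * b + b')) * log 2 (EZpow PW PUW PV b)
   + (- b / (2 * b + b')) * log 2 ((ESqrtCond PW PUW PV (1 - b'))\<^sup>2)"

definition gamma :: "('w::finite \<Rightarrow> real) \<Rightarrow> ('w \<Rightarrow> 'u::finite \<Rightarrow> real)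
    \<Rightarrow> ('w \<Rightarrow> 'u \<Rightarrow> 'v::finite \<Rightarrow> real) \<Rightarrow> real" where
  "gamma PW PUW PV = Sup {gamma_obj PW PUW PV b b' | b b'.
       0 \<le> b \<and> 0 \<le> b' \<and> (b, b') \<noteq> (0, 0)}"

text \<open>Length-n sequences over a type: functions on {..<n}, undefined outside.\<close>
definition seqs :: "nat \<Rightarrow> (nat \<Rightarrow> 'a) set" where
  "seqs n = PiE {..<n} (\<lambda>_. UNIV)"

definition codebooks :: "nat \<Rightarrow> ((nat \<Rightarrow> 'w) \<Rightarrow> (nat \<Rightarrow> 'u)) set" where
  "codebooks n = PiE (seqs n) (\<lambda>_. seqs n)"

definition codebook_prob :: "('w \<Rightarrow> 'u \<Rightarrow> real) \<Rightarrow> nat \<Rightarrow> ((nat \<Rightarrow> 'w) \<Rightarrow> (nat \<Rightarrow> 'u)) \<Rightarrow> real" where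
  "codebook_prob PUW n C = (\<Prod>w\<in>seqs n. \<Prod>t<n. PUW (w t) (C w t))"

definition P_out :: "('w \<Rightarrow> real) \<Rightarrow> ('w \<Rightarrow> 'u \<Rightarrow> 'v \<Rightarrow> real) \<Rightarrow> nat
    \<Rightarrow> ((nat \<Rightarrow> 'w) \<Rightarrow> (nat \<Rightarrow> 'u)) \<Rightarrow> (nat \<Rightarrow> 'v) \<Rightarrow> real" where
  "P_out PW PV n C vs = (\<Sum>w\<in>seqs n. \<Prod>t<n. PW (w t) * PV (w t) (C w t) (vs t))"

definition Q_out :: "('w::finite \<Rightarrow> real) \<Rightarrow> ('w \<Rightarrow> 'u::finite \<Rightarrow> real)
    \<Rightarrow> ('w \<Rightarrow> 'u \<Rightarrow> 'v \<Rightarrow> real) \<Rightarrow> nat \<Rightarrow> (nat \<Rightarrow> 'v) \<Rightarrow> real" where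
  "Q_out PW PUW PV n vs = (\<Prod>t<n. PhiV PW PUW PV (vs t))"

definition tv_dist :: "nat \<Rightarrow> ((nat \<Rightarrow> 'v) \<Rightarrow> real) \<Rightarrow> ((nat \<Rightarrow> 'v) \<Rightarrow> real) \<Rightarrow> real" where
  "tv_dist n P Q = (1/2) * (\<Sum>vs\<in>seqs n. \<bar>P vs - Q vs\<bar>)"

definition expected_tv :: "('w::finite \<Rightarrow> real) \<Rightarrow> ('w \<Rightarrow> 'u::finite \<Rightarrow> real)
    \<Rightarrow> ('w \<Rightarrow> 'u \<Rightarrow> 'v::finite \<Rightarrow> real) \<Rightarrow> nat \<Rightarrow> real" where
  "expected_tv PW PUW PV n = (\<Sum>C\<in>codebooks n. codebook_prob PUW n C *
       tv_dist n (P_out PW PV n C) (Q_out PW PUW PV n))"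

end

theory Submission
  imports Defs
begin

(*
  For a fixed output sequence v, P_out(v) is a sum over messages w of independent random terms
  (the codewords are drawn independently) whose mean is Q_out(v). Split every term at the
  threshold Z^n(w,u,v) <= tau: the truncated part is controlled by its variance, using
  Z <= tau^b' Z^(1-b') below the threshold, and the tail by Markov's inequality, using
  1 <= tau^(-b) Z^b above it. Both bounds factorise over the memoryless letters, which gives
  E TV <= 1/2 tau^(b'/2) A^n + tau^(-b) B^n with A = ESqrtCond (1-b') and B = EZpow b;
  balancing tau turns this into 3/2 * 2^(-gamma_obj b b' n), and the bound passes to the
  supremum gamma. Finally gamma > 0 because the derivative of b |-> E Z^b at 0 is
  ln 2 (I(W,U;V) - H(W)) < 0, so E Z^b < 1 for some small b > 0.
*)

lemma weighted_sum_abs_le_sqrt: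
  fixes p X :: "'c \<Rightarrow> real"
  assumes "finite K" "\<And>c. c \<in> K \<Longrightarrow> 0 \<le> p c" "(\<Sum>c\<in>K. p c) = 1"
  shows "(\<Sum>c\<in>K. p c * \<bar>X c\<bar>) \<le> sqrt (\<Sum>c\<in>K. p c * (X c)\<^sup>2)"
proof -
  define \<mu> where "\<mu> = (\<Sum>c\<in>K. p c * \<bar>X c\<bar>)"
  have "0 \<le> (\<Sum>c\<in>K. p c * (\<bar>X c\<bar> - \<mu>)\<^sup>2)"
    using assms by (intro sum_nonneg) auto
  also have "\<dots> = (\<Sum>c\<in>K. p c * (X c)\<^sup>2) - 2 * \<mu> * (\<Sum>c\<in>K. p c * \<bar>X c\<bar>) + \<mu>\<^sup>2 * (\<Sum>c\<in>K. p c)"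
    by (simp add: power2_eq_square algebra_simps sum.distrib sum_subtractf sum_distrib_left)
  finally have "\<mu>\<^sup>2 \<le> (\<Sum>c\<in>K. p c * (X c)\<^sup>2)"
    using assms(3) by (simp add: \<mu>_def power2_eq_square)
  then show ?thesis
    unfolding \<mu>_def by (simp add: real_le_rsqrt)
qed

locale finite_product_weights =
  fixes I :: "'i set" and B :: "'i \<Rightarrow> 'b set" and p :: "'i \<Rightarrow> 'b \<Rightarrow> real"
  assumes finite_I: "finite I"
    and finite_B: "\<And>i. i \<in> I \<Longrightarrow> finite (B i)"
    and p_nonneg: "\<And>i b. i \<in> I \<Longrightarrow> b \<in> B i \<Longrightarrow> 0 \<le> p i b"
    and sum_p: "\<And>i. i \<in> I \<Longrightarrow> (\<Sum>b\<in>B i. p i b) = 1"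
begin

definition weight :: "('i \<Rightarrow> 'b) \<Rightarrow> real" where
  "weight C = (\<Prod>i\<in>I. p i (C i))"

lemma finite_PiE_B: "finite (PiE I B)"
  using finite_I finite_B by (rule finite_PiE)

lemma weight_nonneg: "C \<in> PiE I B \<Longrightarrow> 0 \<le> weight C"
  unfolding weight_def by (auto intro!: prod_nonneg p_nonneg)

lemma expectation_prod_coords:
  assumes "K \<subseteq> I"
  shows "(\<Sum>C\<in>PiE I B. weight C * (\<Prod>j\<in>K. f j (C j))) = (\<Prod>j\<in>K. \<Sum>b\<in>B j. p j b * f j b)"
proof -
  define g where "g i b = (if i \<in> K then p i b * f i b else p i b)" for i b
  have split: "(\<Prod>i\<in>I. h i) = (\<Prod>i\<in>K. h i) * (\<Prod>i\<in>I - K. h i)" for h :: "'i \<Rightarrow> real"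
    using prod.subset_diff[OF assms finite_I] by (simp add: mult.commute)
  have "weight C * (\<Prod>j\<in>K. f j (C j)) = (\<Prod>i\<in>I. g i (C i))" for C
    unfolding weight_def split[of "\<lambda>i. g i (C i)"] split[of "\<lambda>i. p i (C i)"]
    by (simp add: g_def prod.distrib)
  then have "(\<Sum>C\<in>PiE I B. weight C * (\<Prod>j\<in>K. f j (C j))) = (\<Prod>i\<in>I. \<Sum>b\<in>B i. g i b)"
    using finite_I finite_B by (simp add: prod_sum_PiE)
  also have "\<dots> = (\<Prod>j\<in>K. \<Sum>b\<in>B j. p j b * f j b)"
    unfolding split[of "\<lambda>i. \<Sum>b\<in>B i. g i b"] using assms by (simp add: g_def sum_p)
  finally show ?thesis .
qed

lemma sum_weight: "(\<Sum>C\<in>PiE I B. weight C) = 1"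
  using expectation_prod_coords[of "{}"] by simp

lemma expectation_coord:
  assumes "j \<in> I"
  shows "(\<Sum>C\<in>PiE I B. weight C * f (C j)) = (\<Sum>b\<in>B j. p j b * f b)"
  using expectation_prod_coords[of "{j}" "\<lambda>_. f"] assms by simp

lemma expectation_two_coords:
  assumes "j \<in> I" "k \<in> I" "j \<noteq> k"
  shows "(\<Sum>C\<in>PiE I B. weight C * (f (C j) * h (C k))) =
    (\<Sum>b\<in>B j. p j b * f b) * (\<Sum>b\<in>B k. p k b * h b)"
  using expectation_prod_coords[of "{j, k}" "\<lambda>i. if i = j then f else h"] assms by simp

lemma expectation_sum_coords:
  "(\<Sum>C\<in>PiE I B. weight C * (\<Sum>i\<in>I. f i (C i))) = (\<Sum>i\<in>I. \<Sum>b\<in>B i. p i b * f i b)"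
proof -
  have "(\<Sum>C\<in>PiE I B. weight C * (\<Sum>i\<in>I. f i (C i))) = (\<Sum>i\<in>I. \<Sum>C\<in>PiE I B. weight C * f i (C i))"
    by (simp add: sum_distrib_left sum.swap[of _ "PiE I B"])
  then show ?thesis by (simp add: expectation_coord)
qed

lemma second_moment_centered_sum_le:
  fixes y :: "'i \<Rightarrow> 'b \<Rightarrow> real"
  defines "m i \<equiv> (\<Sum>b\<in>B i. p i b * y i b)"
  shows "(\<Sum>C\<in>PiE I B. weight C * (\<Sum>i\<in>I. y i (C i) - m i)\<^sup>2)
    \<le> (\<Sum>i\<in>I. \<Sum>b\<in>B i. p i b * (y i b)\<^sup>2)"
proof -
  let ?c = "\<lambda>i b. y i b - m i"
  have centered: "(\<Sum>b\<in>B i. p i b * ?c i b) = 0" if "i \<in> I" for i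
    using sum_p[OF that] by (simp add: m_def right_diff_distrib sum_subtractf sum_distrib_right[symmetric])
  have diagonal: "(\<Sum>b\<in>B i. p i b * (?c i b)\<^sup>2) \<le> (\<Sum>b\<in>B i. p i b * (y i b)\<^sup>2)" if "i \<in> I" for i
  proof -
    have "(\<Sum>b\<in>B i. p i b * (?c i b)\<^sup>2)
        = (\<Sum>b\<in>B i. p i b * (y i b)\<^sup>2 - 2 * m i * (p i b * y i b) + (m i)\<^sup>2 * p i b)"
      by (intro sum.cong refl) (simp add: power2_eq_square algebra_simps)
    also have "\<dots> = (\<Sum>b\<in>B i. p i b * (y i b)\<^sup>2) - 2 * m i * m i + (m i)\<^sup>2 * (\<Sum>b\<in>B i. p i b)"
      by (simp add: m_def sum.distrib sum_subtractf sum_distrib_left)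
    finally have "(\<Sum>b\<in>B i. p i b * (?c i b)\<^sup>2)
        = (\<Sum>b\<in>B i. p i b * (y i b)\<^sup>2) - 2 * m i * m i + (m i)\<^sup>2 * (\<Sum>b\<in>B i. p i b)" .
    then show ?thesis using sum_p[OF that] by (simp add: power2_eq_square)
  qed
  have "(\<Sum>C\<in>PiE I B. weight C * (\<Sum>i\<in>I. ?c i (C i))\<^sup>2)
      = (\<Sum>C\<in>PiE I B. \<Sum>i\<in>I. \<Sum>j\<in>I. weight C * (?c i (C i) * ?c j (C j)))"
    unfolding power2_eq_square sum_product by (simp add: sum_distrib_left)
  also have "\<dots> = (\<Sum>i\<in>I. \<Sum>j\<in>I. \<Sum>C\<in>PiE I B. weight C * (?c i (C i) * ?c j (C j)))"
    by (rule trans[OF sum.swap]) (intro sum.cong refl sum.swap)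
  also have "\<dots> \<le> (\<Sum>i\<in>I. \<Sum>j\<in>I. if i = j then (\<Sum>b\<in>B i. p i b * (y i b)\<^sup>2) else 0)"
  proof (intro sum_mono)
    fix i j assume ij: "i \<in> I" "j \<in> I"
    show "(\<Sum>C\<in>PiE I B. weight C * (?c i (C i) * ?c j (C j)))
        \<le> (if i = j then (\<Sum>b\<in>B i. p i b * (y i b)\<^sup>2) else 0)"
    proof (cases "i = j")
      case True
      then show ?thesis
        using expectation_coord[OF ij(1), of "\<lambda>b. (?c i b)\<^sup>2"] diagonal[OF ij(1)]
        by (simp add: power2_eq_square)
    next
      case False
      then show ?thesis
        using expectation_two_coords[OF ij False, of "?c i" "?c j"] centered ij by simp
    qed
  qed
  also have "\<dots> = (\<Sum>i\<in>I. \<Sum>b\<in>B i. p i b * (y i b)\<^sup>2)"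
    using finite_I by (simp add: sum.delta)
  finally show ?thesis .
qed

lemma expected_abs_deviation_le:
  assumes r_nonneg: "\<And>i b. i \<in> I \<Longrightarrow> b \<in> B i \<Longrightarrow> 0 \<le> r i b"
  shows "(\<Sum>C\<in>PiE I B. weight C *
      \<bar>(\<Sum>i\<in>I. y i (C i) + r i (C i)) - (\<Sum>i\<in>I. \<Sum>b\<in>B i. p i b * (y i b + r i b))\<bar>)
    \<le> sqrt (\<Sum>i\<in>I. \<Sum>b\<in>B i. p i b * (y i b)\<^sup>2) + 2 * (\<Sum>i\<in>I. \<Sum>b\<in>B i. p i b * r i b)"
proof -
  define m where "m i = (\<Sum>b\<in>B i. p i b * y i b)" for i
  define R where "R = (\<Sum>i\<in>I. \<Sum>b\<in>B i. p i b * r i b)"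
  define D where "D C = (\<Sum>i\<in>I. y i (C i) - m i)" for C
  have R_nonneg: "0 \<le> R"
    unfolding R_def by (auto intro!: sum_nonneg mult_nonneg_nonneg p_nonneg r_nonneg)
  have pointwise: "\<bar>(\<Sum>i\<in>I. y i (C i) + r i (C i)) - (\<Sum>i\<in>I. \<Sum>b\<in>B i. p i b * (y i b + r i b))\<bar>
      \<le> \<bar>D C\<bar> + (\<Sum>i\<in>I. r i (C i)) + R" if "C \<in> PiE I B" for C
  proof -
    have "(\<Sum>i\<in>I. y i (C i) + r i (C i)) - (\<Sum>i\<in>I. \<Sum>b\<in>B i. p i b * (y i b + r i b))
        = D C + (\<Sum>i\<in>I. r i (C i)) - R"
      by (simp add: D_def R_def m_def distrib_left sum.distrib sum_subtractf)
    moreover have "0 \<le> (\<Sum>i\<in>I. r i (C i))"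
      using that by (auto intro!: sum_nonneg r_nonneg)
    ultimately show ?thesis using R_nonneg by linarith
  qed
  have "(\<Sum>C\<in>PiE I B. weight C * \<bar>D C\<bar>) \<le> sqrt (\<Sum>C\<in>PiE I B. weight C * (D C)\<^sup>2)"
    by (rule weighted_sum_abs_le_sqrt) (auto simp: finite_PiE_B weight_nonneg sum_weight)
  also have "\<dots> \<le> sqrt (\<Sum>i\<in>I. \<Sum>b\<in>B i. p i b * (y i b)\<^sup>2)"
    unfolding D_def m_def using second_moment_centered_sum_le by simp
  finally have concentration: "(\<Sum>C\<in>PiE I B. weight C * \<bar>D C\<bar>) \<le> sqrt (\<Sum>i\<in>I. \<Sum>b\<in>B i. p i b * (y i b)\<^sup>2)" .
  have "(\<Sum>C\<in>PiE I B. weight C *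
      \<bar>(\<Sum>i\<in>I. y i (C i) + r i (C i)) - (\<Sum>i\<in>I. \<Sum>b\<in>B i. p i b * (y i b + r i b))\<bar>)
    \<le> (\<Sum>C\<in>PiE I B. weight C * (\<bar>D C\<bar> + (\<Sum>i\<in>I. r i (C i)) + R))"
    by (intro sum_mono mult_left_mono pointwise weight_nonneg)
  also have "\<dots> = (\<Sum>C\<in>PiE I B. weight C * \<bar>D C\<bar>) + 2 * R"
    by (simp add: distrib_left sum.distrib flip: sum_distrib_right)
      (simp add: expectation_sum_coords sum_weight R_def)
  finally show ?thesis using concentration R_def by linarith
qed

end

lemma finite_seqs [simp]: "finite (seqs n :: (nat \<Rightarrow> 'a::finite) set)"
  unfolding seqs_def by (intro finite_PiE) auto

lemma sum_seqs_prod: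
  fixes f :: "nat \<Rightarrow> 'a::finite \<Rightarrow> real"
  shows "(\<Sum>x\<in>seqs n. \<Prod>t<n. f t (x t)) = (\<Prod>t<n. \<Sum>a\<in>UNIV. f t a)"
  unfolding seqs_def by (subst prod_sum_PiE) auto

lemma sum_seqs_seqs_prod:
  fixes h :: "nat \<Rightarrow> 'a::finite \<Rightarrow> 'b::finite \<Rightarrow> real"
  shows "(\<Sum>x\<in>seqs n. \<Sum>y\<in>seqs n. \<Prod>t<n. h t (x t) (y t)) = (\<Prod>t<n. \<Sum>a\<in>UNIV. \<Sum>b\<in>UNIV. h t a b)"
  by (simp add: sum_seqs_prod[of "\<lambda>t. h t (_ t)"] sum_seqs_prod[of "\<lambda>t a. \<Sum>b\<in>UNIV. h t a b"])

lemma sqrt_prod_lessThan: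
  fixes f :: "nat \<Rightarrow> real"
  shows "sqrt (\<Prod>t<n. f t) = (\<Prod>t<n. sqrt (f t))"
  by (induction n) (simp_all add: real_sqrt_mult)

text \<open>The threshold tau = (B/A) powr (2n/(2b+b')) equalises the two terms.\<close>
lemma balanced_threshold:
  fixes A B b b' :: real and n :: nat
  assumes A: "0 < A" and B: "0 < B" and b: "0 \<le> b" and D: "0 < 2 * b + b'"
  obtains \<tau> where "0 < \<tau>"
    and "1/2 * (\<tau> powr (b' / 2) * A ^ n) + \<tau> powr (- b) * B ^ n
      = 3/2 * 2 powr (- ((- b' / (2 * b + b')) * log 2 B + (- b / (2 * b + b')) * log 2 (A\<^sup>2)) * n)"
proof
  define D where "D = 2 * b + b'"
  define \<tau> where "\<tau> = (B / A) powr (2 * n / D)"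
  define E where "E = n * (b' / D * ln B + 2 * b / D * ln A)"
  show "0 < \<tau>" unfolding \<tau>_def using A B by simp
  have ln_\<tau>: "ln \<tau> = 2 * n / D * (ln B - ln A)"
    unfolding \<tau>_def using A B by (simp add: ln_powr ln_div)
  have b': "b' = D - 2 * b" and D_pos: "0 < D" using D by (simp_all add: D_def)
  have "\<tau> powr (b' / 2) * A ^ n = exp (b' / 2 * ln \<tau> + n * ln A)"
    using A \<open>0 < \<tau>\<close> by (simp add: powr_def exp_add exp_of_nat_mult)
  also have "b' / 2 * ln \<tau> + n * ln A = E"
    unfolding ln_\<tau> E_def b' using D_pos by (simp add: field_simps)
  finally have first: "\<tau> powr (b' / 2) * A ^ n = exp E" .
  have "\<tau> powr (- b) * B ^ n = exp (- b * ln \<tau>) * exp (n * ln B)"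
    using B \<open>0 < \<tau>\<close> by (simp add: powr_def exp_of_nat_mult)
  also have "\<dots> = exp (- b * ln \<tau> + n * ln B)"
    by (rule exp_add[symmetric])
  also have "- b * ln \<tau> + n * ln B = E"
    unfolding ln_\<tau> E_def b' using D_pos by (simp add: field_simps)
  finally have second: "\<tau> powr (- b) * B ^ n = exp E" .
  have "- ((- b' / D) * log 2 B + (- b / D) * log 2 (A\<^sup>2)) * n * ln 2 = E"
    unfolding E_def log_def using A D_pos by (simp add: ln_realpow field_simps)
  then have "2 powr (- ((- b' / D) * log 2 B + (- b / D) * log 2 (A\<^sup>2)) * n) = exp E"
    by (simp add: powr_def)
  then show "1/2 * (\<tau> powr (b' / 2) * A ^ n) + \<tau> powr (- b) * B ^ n
      = 3/2 * 2 powr (- ((- b' / (2 * b + b')) * log 2 B + (- b / (2 * b + b')) * log 2 (A\<^sup>2)) * n)"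
    unfolding first second D_def by simp
qed

lemma le_powr_Sup:
  fixes G :: "real set" and x c :: real and n :: nat
  assumes "G \<noteq> {}" "bdd_above G" "0 \<le> c" and bound: "\<And>g. g \<in> G \<Longrightarrow> x \<le> c * 2 powr (- g * n)"
  shows "x \<le> c * 2 powr (- Sup G * n)"
proof -
  obtain g0 where "g0 \<in> G" using assms(1) by blast
  consider "x \<le> 0" | "n = 0" | "0 < x" "0 < n" by linarith
  then show ?thesis
  proof cases
    case 1
    then show ?thesis using \<open>0 \<le> c\<close> by (smt (verit) mult_nonneg_nonneg powr_ge_zero)
  next
    case 2
    then show ?thesis using bound[OF \<open>g0 \<in> G\<close>] by simp
  next
    case 3
    then have x: "0 < x" and n: "0 < n" and c: "0 < c"
      using bound[OF \<open>g0 \<in> G\<close>] \<open>0 \<le> c\<close> by (auto simp: le_less)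
    have "g \<le> log 2 (c / x) / n" if "g \<in> G" for g
    proof -
      have "x / c \<le> 2 powr (- g * n)"
        using bound[OF that] c by (simp add: divide_le_eq mult.commute)
      then have "log 2 (x / c) \<le> - g * n"
        using x c by (simp add: le_powr_iff)
      then show ?thesis
        using x c n by (simp add: log_divide field_simps)
    qed
    then have "Sup G \<le> log 2 (c / x) / n"
      by (intro cSup_least assms(1))
    then have "log 2 (x / c) \<le> - Sup G * n"
      using x c n by (simp add: log_divide field_simps)
    then have "x / c \<le> 2 powr (- Sup G * n)"
      using x c by (simp add: le_powr_iff)
    then show ?thesis
      using c by (simp add: divide_le_eq mult.commute)
  qed
qed

locale memoryless_setting =
  fixes PW :: "'w::finite \<Rightarrow> real"
    and PUW :: "'w \<Rightarrow> 'u::finite \<Rightarrow> real"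
    and PV :: "'w \<Rightarrow> 'u \<Rightarrow> 'v::finite \<Rightarrow> real"
  assumes pmf_W: "is_pmf PW" and pmf_U: "\<And>w. is_pmf (PUW w)" and pmf_V: "\<And>w u. is_pmf (PV w u)"
begin

abbreviation "J \<equiv> joint PW PUW PV"
abbreviation "PhV \<equiv> PhiV PW PUW PV"
abbreviation "Z \<equiv> Zfun PW PUW PV"

lemma PW_nonneg: "0 \<le> PW w" and PUW_nonneg: "0 \<le> PUW w u" and PV_nonneg: "0 \<le> PV w u v"
  using pmf_W pmf_U pmf_V by (simp_all add: is_pmf_def)

lemma sum_PW: "(\<Sum>w\<in>UNIV. PW w) = 1" and sum_PUW: "(\<Sum>u\<in>UNIV. PUW w u) = 1"
  and sum_PV: "(\<Sum>v\<in>UNIV. PV w u v) = 1"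
  using pmf_W pmf_U pmf_V by (simp_all add: is_pmf_def)

lemma joint_nonneg: "0 \<le> J w u v"
  unfolding joint_def by (simp add: PW_nonneg PUW_nonneg PV_nonneg)

lemma PhiV_nonneg: "0 \<le> PhV v"
  unfolding PhiV_def by (auto intro!: sum_nonneg simp: joint_nonneg)

lemma Zfun_nonneg: "0 \<le> Z w u v"
  unfolding Zfun_def by (simp add: PW_nonneg PV_nonneg PhiV_nonneg)

lemma joint_le_PhiV: "J w u v \<le> PhV v"
proof -
  have "J w u v \<le> (\<Sum>u\<in>UNIV. J w u v)"
    by (rule member_le_sum) (auto simp: joint_nonneg)
  also have "\<dots> \<le> (\<Sum>w\<in>UNIV. \<Sum>u\<in>UNIV. J w u v)"
    by (rule member_le_sum[where f="\<lambda>w. \<Sum>u\<in>UNIV. J w u v"]) (auto intro!: sum_nonneg simp: joint_nonneg)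
  finally show ?thesis by (simp add: PhiV_def)
qed

lemma sum_joint: "(\<Sum>w\<in>UNIV. \<Sum>u\<in>UNIV. \<Sum>v\<in>UNIV. J w u v) = 1"
  by (simp add: joint_def sum_PV sum_PUW sum_PW flip: sum_distrib_left)

lemma sum_PhiV: "(\<Sum>v\<in>UNIV. PhV v) = 1"
proof -
  have "(\<Sum>v\<in>UNIV. PhV v) = (\<Sum>w\<in>UNIV. \<Sum>v\<in>UNIV. \<Sum>u\<in>UNIV. J w u v)"
    unfolding PhiV_def by (rule sum.swap)
  also have "\<dots> = (\<Sum>w\<in>UNIV. \<Sum>u\<in>UNIV. \<Sum>v\<in>UNIV. J w u v)"
    by (intro sum.cong refl sum.swap)
  finally show ?thesis using sum_joint by simp
qed

lemma joint_pos_support: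
  assumes "J w u v \<noteq> 0"
  shows "0 < PW w" "0 < PV w u v" "0 < PhV v" "0 < Z w u v" "PW w * PV w u v = PhV v * Z w u v"
proof -
  show PW: "0 < PW w" and PV: "0 < PV w u v"
    using assms PW_nonneg[of w] PV_nonneg[of w u v] by (auto simp: joint_def less_le)
  show Ph: "0 < PhV v"
    using assms joint_nonneg[of w u v] joint_le_PhiV[of w u v] by linarith
  show "0 < Z w u v" "PW w * PV w u v = PhV v * Z w u v"
    using PW PV Ph by (simp_all add: Zfun_def)
qed

lemma ex_joint_nonzero: "\<exists>w u v. J w u v \<noteq> 0"
proof (rule ccontr)
  assume "\<nexists>w u v. J w u v \<noteq> 0"
  then show False using sum_joint by simp
qed

definition joint_seq :: "nat \<Rightarrow> (nat \<Rightarrow> 'w) \<Rightarrow> (nat \<Rightarrow> 'u) \<Rightarrow> (nat \<Rightarrow> 'v) \<Rightarrow> real" where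
  "joint_seq n w u v = (\<Prod>t<n. J (w t) (u t) (v t))"

definition codeword_prob :: "nat \<Rightarrow> (nat \<Rightarrow> 'w) \<Rightarrow> (nat \<Rightarrow> 'u) \<Rightarrow> real" where
  "codeword_prob n w u = (\<Prod>t<n. PUW (w t) (u t))"

definition output_term :: "nat \<Rightarrow> (nat \<Rightarrow> 'w) \<Rightarrow> (nat \<Rightarrow> 'u) \<Rightarrow> (nat \<Rightarrow> 'v) \<Rightarrow> real" where
  "output_term n w u v = (\<Prod>t<n. PW (w t) * PV (w t) (u t) (v t))"

definition Zfun_seq :: "nat \<Rightarrow> (nat \<Rightarrow> 'w) \<Rightarrow> (nat \<Rightarrow> 'u) \<Rightarrow> (nat \<Rightarrow> 'v) \<Rightarrow> real" where
  "Zfun_seq n w u v = (\<Prod>t<n. Z (w t) (u t) (v t))"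

lemma joint_seq_nonneg: "0 \<le> joint_seq n w u v"
  unfolding joint_seq_def by (auto intro!: prod_nonneg simp: joint_nonneg)

lemma codeword_prob_nonneg: "0 \<le> codeword_prob n w u"
  unfolding codeword_prob_def by (auto intro!: prod_nonneg simp: PUW_nonneg)

lemma output_term_nonneg: "0 \<le> output_term n w u v"
  unfolding output_term_def by (auto intro!: prod_nonneg simp: PW_nonneg PV_nonneg)

lemma Q_out_nonneg: "0 \<le> Q_out PW PUW PV n v"
  unfolding Q_out_def by (auto intro!: prod_nonneg simp: PhiV_nonneg)

lemma sum_codeword_prob: "(\<Sum>u\<in>seqs n. codeword_prob n w u) = 1"
  unfolding codeword_prob_def sum_seqs_prod[where f="\<lambda>t. PUW (w t)"] by (simp add: sum_PUW)

lemma codeword_prob_mult_output_term: "codeword_prob n w u * output_term n w u v = joint_seq n w u v"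
  unfolding codeword_prob_def output_term_def joint_seq_def joint_def prod.distrib[symmetric]
  by (simp add: ac_simps)

lemma sum_joint_seq: "(\<Sum>w\<in>seqs n. \<Sum>u\<in>seqs n. joint_seq n w u v) = Q_out PW PUW PV n v"
  unfolding joint_seq_def Q_out_def PhiV_def by (rule sum_seqs_seqs_prod)

lemma output_term_eq:
  assumes "joint_seq n w u v \<noteq> 0"
  shows "output_term n w u v = Q_out PW PUW PV n v * Zfun_seq n w u v" "0 < Zfun_seq n w u v"
proof -
  have nz: "J (w t) (u t) (v t) \<noteq> 0" if "t < n" for t
    using assms that unfolding joint_seq_def by auto
  show "output_term n w u v = Q_out PW PUW PV n v * Zfun_seq n w u v"
    unfolding output_term_def Q_out_def Zfun_seq_def prod.distrib[symmetric]
    by (intro prod.cong refl) (use joint_pos_support(5)[OF nz] in auto)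
  show "0 < Zfun_seq n w u v"
    unfolding Zfun_seq_def by (intro prod_pos) (use joint_pos_support(4)[OF nz] in auto)
qed

lemma joint_seq_mult_Zfun_seq_powr:
  "joint_seq n w u v * Zfun_seq n w u v powr c = (\<Prod>t<n. J (w t) (u t) (v t) * Z (w t) (u t) (v t) powr c)"
  unfolding joint_seq_def Zfun_seq_def prod.distrib by (simp add: prod_powr_distrib Zfun_nonneg)

lemma sum_joint_seq_Zfun_seq_powr:
  "(\<Sum>v\<in>seqs n. \<Sum>w\<in>seqs n. \<Sum>u\<in>seqs n. joint_seq n w u v * Zfun_seq n w u v powr c)
    = EZpow PW PUW PV c ^ n"
proof -
  have "(\<Sum>v\<in>seqs n. \<Sum>w\<in>seqs n. \<Sum>u\<in>seqs n. joint_seq n w u v * Zfun_seq n w u v powr c)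
      = (\<Sum>v\<in>seqs n. \<Prod>t<n. \<Sum>w\<in>UNIV. \<Sum>u\<in>UNIV. J w u (v t) * Z w u (v t) powr c)"
    unfolding joint_seq_mult_Zfun_seq_powr
    by (intro sum.cong refl) (rule sum_seqs_seqs_prod[where h="\<lambda>t w u. J w u (_ t) * Z w u (_ t) powr c"])
  also have "\<dots> = (\<Sum>v\<in>UNIV. \<Sum>w\<in>UNIV. \<Sum>u\<in>UNIV. J w u v * Z w u v powr c) ^ n"
    by (simp add: sum_seqs_prod[where f="\<lambda>_ v. \<Sum>w\<in>UNIV. \<Sum>u\<in>UNIV. J w u v * Z w u v powr c"])
  also have "(\<Sum>v\<in>UNIV. \<Sum>w\<in>UNIV. \<Sum>u\<in>UNIV. J w u v * Z w u v powr c) = EZpow PW PUW PV c"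
    unfolding EZpow_def by (subst sum.swap) (intro sum.cong refl sum.swap)
  finally show ?thesis .
qed

definition output_moment :: "real \<Rightarrow> 'v \<Rightarrow> real" where
  "output_moment c v = PhV v * (\<Sum>w\<in>UNIV. \<Sum>u\<in>UNIV. J w u v * Z w u v powr c)"

lemma output_moment_nonneg: "0 \<le> output_moment c v"
  unfolding output_moment_def by (auto intro!: mult_nonneg_nonneg sum_nonneg PhiV_nonneg joint_nonneg)

lemma ESqrtCond_eq: "ESqrtCond PW PUW PV c = (\<Sum>v\<in>UNIV. sqrt (output_moment c v))"
  unfolding ESqrtCond_def
proof (intro sum.cong refl)
  fix v
  let ?S = "\<Sum>w\<in>UNIV. \<Sum>u\<in>UNIV. J w u v * Z w u v powr c"
  have "PhV v * sqrt (?S / PhV v) = sqrt (PhV v * ?S)"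
  proof (cases "PhV v = 0")
    case False
    then have "PhV v * ?S = (PhV v)\<^sup>2 * (?S / PhV v)" by (simp add: power2_eq_square)
    then have "sqrt (PhV v * ?S) = sqrt ((PhV v)\<^sup>2) * sqrt (?S / PhV v)"
      by (simp only: real_sqrt_mult)
    then show ?thesis using PhiV_nonneg[of v] by simp
  qed simp
  then show "PhV v * sqrt (\<Sum>w\<in>UNIV. \<Sum>u\<in>UNIV. J w u v / PhV v * Z w u v powr c)
      = sqrt (output_moment c v)"
    by (simp add: output_moment_def sum_divide_distrib)
qed

lemma sum_sqrt_output_moment_seq:
  "(\<Sum>v\<in>seqs n. sqrt (Q_out PW PUW PV n v *
      (\<Sum>w\<in>seqs n. \<Sum>u\<in>seqs n. joint_seq n w u v * Zfun_seq n w u v powr c)))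
    = ESqrtCond PW PUW PV c ^ n"
proof -
  have "Q_out PW PUW PV n v * (\<Sum>w\<in>seqs n. \<Sum>u\<in>seqs n. joint_seq n w u v * Zfun_seq n w u v powr c)
      = (\<Prod>t<n. output_moment c (v t))" for v
    unfolding joint_seq_mult_Zfun_seq_powr sum_seqs_seqs_prod[where h="\<lambda>t w u. J w u (v t) * Z w u (v t) powr c"]
    unfolding Q_out_def output_moment_def prod.distrib ..
  then show ?thesis
    by (simp add: sqrt_prod_lessThan ESqrtCond_eq sum_seqs_prod[where f="\<lambda>_ v. sqrt (output_moment c v)"])
qed

lemma codeword_prob_product_weights:
  "finite_product_weights (seqs n) (\<lambda>_. seqs n) (codeword_prob n)"
  by unfold_locales (auto simp: codeword_prob_nonneg sum_codeword_prob)

lemma codebook_prob_eq_weight: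
  "codebook_prob PUW n C = finite_product_weights.weight (seqs n) (codeword_prob n) C"
  by (simp add: codebook_prob_def codeword_prob_def
      finite_product_weights.weight_def[OF codeword_prob_product_weights])

lemma truncated_term_square_le:
  assumes "0 < \<tau>" "0 \<le> b'"
  shows "codeword_prob n w u * (if Zfun_seq n w u v \<le> \<tau> then output_term n w u v else 0)\<^sup>2
    \<le> \<tau> powr b' * (Q_out PW PUW PV n v * (joint_seq n w u v * Zfun_seq n w u v powr (1 - b')))"
    (is "?lhs \<le> \<tau> powr b' * (?Q * (?J * ?Z powr (1 - b')))")
proof (cases "?J \<noteq> 0 \<and> ?Z \<le> \<tau>")
  case True
  note Z_pos = output_term_eq(2)[of n w u v]
  have lhs: "?lhs = ?J * ?Q * ?Z"
    using True codeword_prob_mult_output_term[of n w u v] output_term_eq(1)[of n w u v]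
    by (simp add: power2_eq_square algebra_simps)
  have "?Z = ?Z powr (1 - b') * ?Z powr b'"
    using True Z_pos by (simp flip: powr_add)
  also have "\<dots> \<le> ?Z powr (1 - b') * \<tau> powr b'"
    using True Z_pos assms by (intro mult_left_mono powr_mono2) auto
  finally have "?J * ?Q * ?Z \<le> ?J * ?Q * (?Z powr (1 - b') * \<tau> powr b')"
    using joint_seq_nonneg Q_out_nonneg by (simp add: mult_left_mono)
  then show ?thesis
    unfolding lhs by (simp add: ac_simps)
next
  case False
  then have "?lhs = 0"
    using codeword_prob_mult_output_term[of n w u v] by (auto simp: power2_eq_square)
  moreover have "0 \<le> \<tau> powr b' * (?Q * (?J * ?Z powr (1 - b')))"
    using joint_seq_nonneg Q_out_nonneg by simp
  ultimately show ?thesis by linarith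
qed

lemma tail_term_le:
  assumes "0 < \<tau>" "0 \<le> b"
  shows "codeword_prob n w u * (if Zfun_seq n w u v \<le> \<tau> then 0 else output_term n w u v)
    \<le> \<tau> powr (- b) * (joint_seq n w u v * Zfun_seq n w u v powr b)"
    (is "?lhs \<le> \<tau> powr (- b) * (?J * ?Z powr b)")
proof (cases "?Z \<le> \<tau>")
  case False
  have "1 \<le> \<tau> powr (- b) * ?Z powr b"
    using False assms powr_mono2[of b \<tau> ?Z] by (simp add: powr_minus field_simps)
  then have "?J \<le> ?J * (\<tau> powr (- b) * ?Z powr b)"
    using joint_seq_nonneg mult_left_mono by fastforce
  then show ?thesis
    using False codeword_prob_mult_output_term[of n w u v] by (simp add: ac_simps)
qed (simp add: joint_seq_nonneg)

lemma expected_abs_deviation_output: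
  assumes "0 < \<tau>" "0 \<le> b" "0 \<le> b'"
  shows "(\<Sum>C\<in>codebooks n. codebook_prob PUW n C * \<bar>P_out PW PV n C v - Q_out PW PUW PV n v\<bar>)
    \<le> \<tau> powr (b' / 2) * sqrt (Q_out PW PUW PV n v *
          (\<Sum>w\<in>seqs n. \<Sum>u\<in>seqs n. joint_seq n w u v * Zfun_seq n w u v powr (1 - b')))
      + 2 * (\<tau> powr (- b) * (\<Sum>w\<in>seqs n. \<Sum>u\<in>seqs n. joint_seq n w u v * Zfun_seq n w u v powr b))"
proof -
  interpret finite_product_weights "seqs n" "\<lambda>_. seqs n" "codeword_prob n"
    by (rule codeword_prob_product_weights)
  let ?Q = "Q_out PW PUW PV n v"
  define y where "y w u = (if Zfun_seq n w u v \<le> \<tau> then output_term n w u v else 0)" for w u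
  define r where "r w u = (if Zfun_seq n w u v \<le> \<tau> then 0 else output_term n w u v)" for w u
  have y_plus_r: "y w u + r w u = output_term n w u v" for w u
    by (simp add: y_def r_def)
  have P_out_eq: "P_out PW PV n C v = (\<Sum>w\<in>seqs n. y w (C w) + r w (C w))" for C
    unfolding y_plus_r by (simp add: P_out_def output_term_def)
  have Q_out_eq: "?Q = (\<Sum>w\<in>seqs n. \<Sum>u\<in>seqs n. codeword_prob n w u * (y w u + r w u))"
    by (simp add: y_plus_r codeword_prob_mult_output_term sum_joint_seq)
  have second_moment: "sqrt (\<Sum>w\<in>seqs n. \<Sum>u\<in>seqs n. codeword_prob n w u * (y w u)\<^sup>2)
      \<le> \<tau> powr (b' / 2) * sqrt (?Q * (\<Sum>w\<in>seqs n. \<Sum>u\<in>seqs n. joint_seq n w u v * Zfun_seq n w u v powr (1 - b')))"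
  proof -
    have "(\<Sum>w\<in>seqs n. \<Sum>u\<in>seqs n. codeword_prob n w u * (y w u)\<^sup>2)
        \<le> \<tau> powr b' * (?Q * (\<Sum>w\<in>seqs n. \<Sum>u\<in>seqs n. joint_seq n w u v * Zfun_seq n w u v powr (1 - b')))"
      unfolding y_def sum_distrib_left using truncated_term_square_le assms by (intro sum_mono) auto
    then have "sqrt (\<Sum>w\<in>seqs n. \<Sum>u\<in>seqs n. codeword_prob n w u * (y w u)\<^sup>2)
        \<le> sqrt (\<tau> powr b') * sqrt (?Q * (\<Sum>w\<in>seqs n. \<Sum>u\<in>seqs n. joint_seq n w u v * Zfun_seq n w u v powr (1 - b')))"
      by (simp only: real_sqrt_mult[symmetric] real_sqrt_le_iff)
    moreover have "sqrt (\<tau> powr b') = \<tau> powr (b' / 2)"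
      using assms by (simp add: powr_half_sqrt[symmetric] powr_powr)
    ultimately show ?thesis by simp
  qed
  have tail: "(\<Sum>w\<in>seqs n. \<Sum>u\<in>seqs n. codeword_prob n w u * r w u)
      \<le> \<tau> powr (- b) * (\<Sum>w\<in>seqs n. \<Sum>u\<in>seqs n. joint_seq n w u v * Zfun_seq n w u v powr b)"
    unfolding r_def sum_distrib_left using tail_term_le assms by (intro sum_mono) auto
  have "(\<Sum>C\<in>codebooks n. codebook_prob PUW n C * \<bar>P_out PW PV n C v - ?Q\<bar>)
      \<le> sqrt (\<Sum>w\<in>seqs n. \<Sum>u\<in>seqs n. codeword_prob n w u * (y w u)\<^sup>2)
        + 2 * (\<Sum>w\<in>seqs n. \<Sum>u\<in>seqs n. codeword_prob n w u * r w u)"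
    unfolding codebooks_def codebook_prob_eq_weight P_out_eq Q_out_eq
    by (rule expected_abs_deviation_le) (simp add: r_def output_term_nonneg)
  then show ?thesis
    using second_moment tail by linarith
qed

lemma expected_tv_le_threshold:
  assumes "0 < \<tau>" "0 \<le> b" "0 \<le> b'"
  shows "expected_tv PW PUW PV n
    \<le> 1/2 * (\<tau> powr (b' / 2) * ESqrtCond PW PUW PV (1 - b') ^ n) + \<tau> powr (- b) * EZpow PW PUW PV b ^ n"
proof -
  let ?Q = "Q_out PW PUW PV n"
  let ?M = "\<lambda>c v. \<Sum>w\<in>seqs n. \<Sum>u\<in>seqs n. joint_seq n w u v * Zfun_seq n w u v powr c"
  have "expected_tv PW PUW PV n
      = 1/2 * (\<Sum>v\<in>seqs n. \<Sum>C\<in>codebooks n. codebook_prob PUW n C * \<bar>P_out PW PV n C v - ?Q v\<bar>)"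
    unfolding expected_tv_def tv_dist_def sum_distrib_left mult.left_commute[of _ "1/2"]
    by (subst sum.swap) (rule refl)
  also have "\<dots> \<le> 1/2 * (\<Sum>v\<in>seqs n.
      \<tau> powr (b' / 2) * sqrt (?Q v * ?M (1 - b') v) + 2 * (\<tau> powr (- b) * ?M b v))"
    using expected_abs_deviation_output[OF assms] by (intro mult_left_mono sum_mono) auto
  also have "\<dots> = 1/2 * (\<tau> powr (b' / 2) * (\<Sum>v\<in>seqs n. sqrt (?Q v * ?M (1 - b') v)))
      + \<tau> powr (- b) * (\<Sum>v\<in>seqs n. ?M b v)"
    by (simp add: sum.distrib sum_distrib_left algebra_simps)
  also have "\<dots> = 1/2 * (\<tau> powr (b' / 2) * ESqrtCond PW PUW PV (1 - b') ^ n) + \<tau> powr (- b) * EZpow PW PUW PV b ^ n"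
    by (simp only: sum_sqrt_output_moment_seq sum_joint_seq_Zfun_seq_powr)
  finally show ?thesis .
qed

lemma EZpow_ge_term: "J w u v * Z w u v powr b \<le> EZpow PW PUW PV b"
proof -
  have nonneg: "0 \<le> J w u v * Z w u v powr b" for w u v
    by (simp add: joint_nonneg)
  have "J w u v * Z w u v powr b \<le> (\<Sum>v\<in>UNIV. J w u v * Z w u v powr b)"
    by (rule member_le_sum) (auto simp: nonneg)
  also have "\<dots> \<le> (\<Sum>u\<in>UNIV. \<Sum>v\<in>UNIV. J w u v * Z w u v powr b)"
    by (rule member_le_sum[where f="\<lambda>u. \<Sum>v\<in>UNIV. J w u v * Z w u v powr b"])
      (auto intro!: sum_nonneg simp: nonneg)
  also have "\<dots> \<le> EZpow PW PUW PV b"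
    unfolding EZpow_def
    by (rule member_le_sum[where f="\<lambda>w. \<Sum>u\<in>UNIV. \<Sum>v\<in>UNIV. J w u v * Z w u v powr b"])
      (auto intro!: sum_nonneg simp: nonneg)
  finally show ?thesis .
qed

lemma ESqrtCond_square_ge_term: "(J w u v)\<^sup>2 * Z w u v powr c \<le> (ESqrtCond PW PUW PV c)\<^sup>2"
proof -
  have nonneg: "0 \<le> J w u v * Z w u v powr c" for w u v
    by (simp add: joint_nonneg)
  have "J w u v * Z w u v powr c \<le> (\<Sum>u\<in>UNIV. J w u v * Z w u v powr c)"
    by (rule member_le_sum[where f="\<lambda>u. J w u v * Z w u v powr c"]) (auto simp: nonneg)
  also have "\<dots> \<le> (\<Sum>w\<in>UNIV. \<Sum>u\<in>UNIV. J w u v * Z w u v powr c)"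
    by (rule member_le_sum[where f="\<lambda>w. \<Sum>u\<in>UNIV. J w u v * Z w u v powr c"])
      (auto intro!: sum_nonneg simp: nonneg)
  finally have "J w u v * (J w u v * Z w u v powr c) \<le> output_moment c v"
    unfolding output_moment_def using joint_le_PhiV[of w u v] joint_nonneg[of w u v] nonneg[of w u v]
    by (intro mult_mono) auto
  then have "(J w u v)\<^sup>2 * Z w u v powr c \<le> (sqrt (output_moment c v))\<^sup>2"
    by (simp add: power2_eq_square output_moment_nonneg)
  also have "\<dots> \<le> (ESqrtCond PW PUW PV c)\<^sup>2"
    unfolding ESqrtCond_eq
    by (intro power_mono member_le_sum) (auto simp: output_moment_nonneg)
  finally show ?thesis .
qed

lemma EZpow_pos: "0 < EZpow PW PUW PV b"
proof -
  obtain w u v where "J w u v \<noteq> 0" using ex_joint_nonzero by blast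
  then have "0 < J w u v * Z w u v powr b"
    using joint_nonneg[of w u v] joint_pos_support(4)[of w u v] by simp
  then show ?thesis using EZpow_ge_term by (rule less_le_trans)
qed

lemma ESqrtCond_pos: "0 < ESqrtCond PW PUW PV c"
proof -
  obtain w u v where "J w u v \<noteq> 0" using ex_joint_nonzero by blast
  then have "0 < (J w u v)\<^sup>2 * Z w u v powr c"
    using joint_pos_support(4)[of w u v] by simp
  then have "0 < (ESqrtCond PW PUW PV c)\<^sup>2"
    using ESqrtCond_square_ge_term by (rule less_le_trans)
  moreover have "0 \<le> ESqrtCond PW PUW PV c"
    unfolding ESqrtCond_eq by (simp add: sum_nonneg output_moment_nonneg)
  ultimately show ?thesis by (simp add: le_less)
qed

text \<open>Evaluating both moments at the same point of the support makes the terms in b b' cancel.\<close>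
lemma gamma_obj_bounded:
  assumes "J w u v \<noteq> 0" "0 \<le> b" "0 \<le> b'" "(b, b') \<noteq> (0, 0)"
  shows "gamma_obj PW PUW PV b b' \<le> \<bar>log 2 (J w u v)\<bar> + \<bar>log 2 (Z w u v)\<bar>"
proof -
  define D where "D = 2 * b + b'"
  have D: "0 < D" using assms(2-4) by (auto simp: D_def)
  have J: "0 < J w u v" and z: "0 < Z w u v"
    using assms(1) joint_nonneg[of w u v] joint_pos_support(4) by auto
  have "log 2 (J w u v * Z w u v powr b) \<le> log 2 (EZpow PW PUW PV b)"
    using EZpow_ge_term[of w u v b] J z EZpow_pos by (subst log_le_cancel_iff) auto
  then have "log 2 (J w u v) + b * log 2 (Z w u v) \<le> log 2 (EZpow PW PUW PV b)"
    using J z by (simp add: log_mult log_powr)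
  moreover have "log 2 ((J w u v)\<^sup>2 * Z w u v powr (1 - b')) \<le> log 2 ((ESqrtCond PW PUW PV (1 - b'))\<^sup>2)"
    using ESqrtCond_square_ge_term[of w u v "1 - b'"] J z ESqrtCond_pos[of "1 - b'"]
    by (subst log_le_cancel_iff) auto
  then have "2 * log 2 (J w u v) + (1 - b') * log 2 (Z w u v) \<le> log 2 ((ESqrtCond PW PUW PV (1 - b'))\<^sup>2)"
    using J z by (simp add: log_mult log_powr log_nat_power)
  ultimately have "gamma_obj PW PUW PV b b'
      \<le> (- b' / D) * (log 2 (J w u v) + b * log 2 (Z w u v))
        + (- b / D) * (2 * log 2 (J w u v) + (1 - b') * log 2 (Z w u v))"
    unfolding gamma_obj_def D_def[symmetric] using D assms(2,3)
    by (intro add_mono mult_left_mono_neg) (auto simp: divide_nonpos_pos)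
  also have "\<dots> = - log 2 (J w u v) - b / D * log 2 (Z w u v)"
    using D by (simp add: field_simps) (simp add: D_def algebra_simps)
  also have "\<dots> \<le> \<bar>log 2 (J w u v)\<bar> + \<bar>log 2 (Z w u v)\<bar>"
  proof -
    have "0 \<le> b / D" "b / D \<le> 1" using D assms(2,3) by (auto simp: D_def)
    then have "- (b / D * log 2 (Z w u v)) \<le> b / D * \<bar>log 2 (Z w u v)\<bar>"
      and "b / D * \<bar>log 2 (Z w u v)\<bar> \<le> \<bar>log 2 (Z w u v)\<bar>"
      by (metis abs_ge_minus_self mult_left_mono mult_minus_right, metis abs_ge_zero mult_left_le_one_le)
    then show ?thesis using abs_ge_minus_self[of "log 2 (J w u v)"] by argo
  qed
  finally show ?thesis .
qed

lemma expected_tv_le_gamma_obj: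
  assumes "0 \<le> b" "0 \<le> b'" "(b, b') \<noteq> (0, 0)"
  shows "expected_tv PW PUW PV n \<le> 3/2 * 2 powr (- gamma_obj PW PUW PV b b' * n)"
proof -
  have "0 < 2 * b + b'" using assms by auto
  obtain \<tau> where "0 < \<tau>" and balanced:
      "1/2 * (\<tau> powr (b' / 2) * ESqrtCond PW PUW PV (1 - b') ^ n) + \<tau> powr (- b) * EZpow PW PUW PV b ^ n
      = 3/2 * 2 powr (- gamma_obj PW PUW PV b b' * n)"
    using balanced_threshold[OF ESqrtCond_pos EZpow_pos \<open>0 \<le> b\<close> \<open>0 < 2 * b + b'\<close>]
    unfolding gamma_obj_def by blast
  show ?thesis
    using expected_tv_le_threshold[OF \<open>0 < \<tau>\<close> assms(1,2), where n=n] unfolding balanced .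
qed

lemma joint_mult_Zfun_powr_zero: "J w u v * Z w u v powr 0 = J w u v"
  using joint_pos_support(4)[of w u v] by (cases "J w u v = 0") auto

lemma EZpow_zero: "EZpow PW PUW PV 0 = 1"
  unfolding EZpow_def joint_mult_Zfun_powr_zero by (rule sum_joint)

lemma ESqrtCond_zero: "ESqrtCond PW PUW PV 0 = 1"
proof -
  have "output_moment 0 v = (PhV v)\<^sup>2" for v
    unfolding output_moment_def joint_mult_Zfun_powr_zero by (simp add: PhiV_def power2_eq_square)
  then show ?thesis
    unfolding ESqrtCond_eq by (simp add: PhiV_nonneg sum_PhiV)
qed

lemma expectation_ln_Zfun:
  "(\<Sum>w\<in>UNIV. \<Sum>u\<in>UNIV. \<Sum>v\<in>UNIV. J w u v * ln (Z w u v)) = ln 2 * (mutinfo PW PUW PV - entropyW PW)"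
proof -
  have split: "J w u v * ln (Z w u v) = ln 2 * (J w u v * log 2 (PV w u v / PhV v) + J w u v * log 2 (PW w))"
    for w u v
  proof (cases "J w u v = 0")
    case False
    note pos = joint_pos_support[OF False]
    have "ln (Z w u v) = ln (PW w * (PV w u v / PhV v))"
      by (simp add: Zfun_def)
    also have "\<dots> = ln (PW w) + ln (PV w u v / PhV v)"
      by (rule ln_mult_pos) (use pos in auto)
    finally show ?thesis by (simp add: log_def field_simps)
  qed simp
  have "(\<Sum>w\<in>UNIV. \<Sum>u\<in>UNIV. \<Sum>v\<in>UNIV. J w u v * log 2 (PW w))
      = (\<Sum>w\<in>UNIV. PW w * log 2 (PW w) * (\<Sum>u\<in>UNIV. PUW w u * (\<Sum>v\<in>UNIV. PV w u v)))"
    by (simp add: joint_def sum_distrib_left sum_distrib_right ac_simps)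
  also have "\<dots> = - entropyW PW"
    by (simp add: sum_PV sum_PUW entropyW_def)
  finally have "(\<Sum>w\<in>UNIV. \<Sum>u\<in>UNIV. \<Sum>v\<in>UNIV. J w u v * log 2 (PW w)) = - entropyW PW" .
  then show ?thesis
    unfolding split sum_distrib_left[symmetric] sum.distrib by (simp add: mutinfo_def)
qed

lemma EZpow_has_derivative_at_zero:
  "((\<lambda>b. EZpow PW PUW PV b) has_real_derivative ln 2 * (mutinfo PW PUW PV - entropyW PW)) (at 0)"
proof -
  have "((\<lambda>b. Z w u v powr b) has_real_derivative ln (Z w u v) * Z w u v powr 0) (at 0)" for w u v
    using has_real_derivative_const_powr[where f="\<lambda>x. x" and f'="\<lambda>_. 1" and a="Z w u v" and x=0] by simp
  then have "((\<lambda>b. EZpow PW PUW PV b) has_real_derivative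
      (\<Sum>w\<in>UNIV. \<Sum>u\<in>UNIV. \<Sum>v\<in>UNIV. J w u v * (ln (Z w u v) * Z w u v powr 0))) (at 0)"
    unfolding EZpow_def by (intro DERIV_sum DERIV_cmult)
  moreover have "J w u v * (ln (Z w u v) * Z w u v powr 0) = J w u v * ln (Z w u v)" for w u v
    using joint_mult_Zfun_powr_zero[of w u v] by (metis mult.assoc mult.commute)
  ultimately show ?thesis
    by (simp only: expectation_ln_Zfun)
qed

lemma EZpow_less_one:
  assumes "entropyW PW > mutinfo PW PUW PV"
  obtains b where "0 < b" "EZpow PW PUW PV b < 1"
proof -
  have "ln 2 * (mutinfo PW PUW PV - entropyW PW) < 0"
    using assms by (simp add: mult_pos_neg)
  then obtain d where "0 < d" and decreasing: "\<And>h. 0 < h \<Longrightarrow> h < d \<Longrightarrow> EZpow PW PUW PV h < EZpow PW PUW PV 0"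
    using DERIV_neg_dec_right[OF EZpow_has_derivative_at_zero] by auto
  then show ?thesis
    using that[of "d / 2"] decreasing[of "d / 2"] by (simp add: EZpow_zero)
qed

lemma gamma_obj_pos:
  assumes "0 < b" "EZpow PW PUW PV b < 1"
  shows "0 < gamma_obj PW PUW PV b 1"
  using assms EZpow_pos[of b] by (simp add: gamma_obj_def ESqrtCond_zero divide_neg_pos)

end

theorem mainTheorem17:
  fixes PW :: "'w::finite \<Rightarrow> real"
    and PUW :: "'w \<Rightarrow> 'u::finite \<Rightarrow> real"
    and PV :: "'w \<Rightarrow> 'u \<Rightarrow> 'v::finite \<Rightarrow> real"
  assumes "is_pmf PW"
    and "\<And>w. is_pmf (PUW w)"
    and "\<And>w u. is_pmf (PV w u)"
    and "entropyW PW > mutinfo PW PUW PV"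
  shows "gamma PW PUW PV > 0 \<and>
    (\<forall>n. expected_tv PW PUW PV n \<le> 3/2 * 2 powr (- gamma PW PUW PV * real n))"
proof -
  interpret memoryless_setting PW PUW PV using assms(1-3) by unfold_locales
  define G where "G = {gamma_obj PW PUW PV b b' | b b'. 0 \<le> b \<and> 0 \<le> b' \<and> (b, b') \<noteq> (0, 0)}"
  have gamma_eq: "gamma PW PUW PV = Sup G" by (simp add: gamma_def G_def)
  obtain b where "0 < b" "EZpow PW PUW PV b < 1" using EZpow_less_one[OF assms(4)] .
  then have "gamma_obj PW PUW PV b 1 \<in> G" "0 < gamma_obj PW PUW PV b 1"
    using gamma_obj_pos unfolding G_def by force+
  moreover obtain w u v where "joint PW PUW PV w u v \<noteq> 0" using ex_joint_nonzero by blast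
  then have "bdd_above G"
    unfolding G_def bdd_above_def using gamma_obj_bounded by blast
  ultimately have "gamma PW PUW PV > 0"
    unfolding gamma_eq by (meson cSup_upper less_le_trans)
  moreover have "expected_tv PW PUW PV n \<le> 3/2 * 2 powr (- gamma PW PUW PV * n)" for n
  proof -
    have "expected_tv PW PUW PV n \<le> 3/2 * 2 powr (- g * n)" if "g \<in> G" for g
      using that expected_tv_le_gamma_obj unfolding G_def by blast
    then show ?thesis
      unfolding gamma_eq using \<open>gamma_obj PW PUW PV b 1 \<in> G\<close> \<open>bdd_above G\<close>
      by (intro le_powr_Sup) auto
  qed
  ultimately show ?thesis by blast
qed

end
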